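(* Let $m\ge2$ and $\theta_c=\frac{m-2}{3m-2}$. There exists a constant $A=A(m)>0$ such that for every $\theta\in(\theta_c,1]$ and every $n\ge1$, $$\rho(\mathrm{Plu},m,n,\theta)\le 2\,m!\,e^{-A(\theta-\theta_c)^2 n}.$$
   Context: A ranking is a strict total order on the candidates. A discrete profile consists of candidates, $n$ voters and a ranking $P_v$ per voter. Plurality: the score of $c$ is the number of voters ranking $c$ first; the highest score wins, ties broken by an arbitrary fixed rule. CM: a rule $f$ is coalitionally manipulable in a discrete profile $P$ if there is a discrete $Q$ with the same candidates and voters such that $f(Q)\ne f(P)$ and every voter $v$ with $Q_v\ne P_v$ prefers $f(Q)$ to $f(P)$ according to $P_v$. Perturbed Culture ($m,n\ge1$, $\theta\in(0,1]$): random discrete profile with candidates $\{1,\dots,m\}$, voters $\{1,\dots,n\}$, each voter independently having ranking $1\succ\cdots\succ m$ with probability $\theta$ and a uniformly random ranking with probability $1-\theta$. $\rho(f,m,n,\theta)$: probability that $f$ is CM in the random profile. *)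

theory Defs
  imports Complex_Main
begin

text \<open>A ranking on candidates {1..m}: a list of all candidates without repetition,
  most preferred first.\<close>
definition rankings :: "nat \<Rightarrow> nat list set" where
  "rankings m = {r. distinct r \<and> set r = {1..m}}"

definition profiles :: "nat \<Rightarrow> nat \<Rightarrow> nat list list set" where
  "profiles m n = {P. length P = n \<and> set P \<subseteq> rankings m}"

definition prefers :: "nat list \<Rightarrow> nat \<Rightarrow> nat \<Rightarrow> bool" where
  "prefers r a b \<longleftrightarrow> (\<exists>i j. i < j \<and> j < length r \<and> r ! i = a \<and> r ! j = b)"

definition plu_score :: "nat list list \<Rightarrow> nat \<Rightarrow> nat" where
  "plu_score P c = card {v. v < length P \<and> hd (P ! v) = c}"

definition plurality :: "(nat set \<Rightarrow> nat) \<Rightarrow> nat \<Rightarrow> nat list list \<Rightarrow> nat" where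
  "plurality tb m P =
     tb {c \<in> {1..m}. \<forall>d \<in> {1..m}. plu_score P d \<le> plu_score P c}"

definition valid_tiebreak :: "nat \<Rightarrow> (nat set \<Rightarrow> nat) \<Rightarrow> bool" where
  "valid_tiebreak m tb \<longleftrightarrow> (\<forall>S. S \<noteq> {} \<longrightarrow> S \<subseteq> {1..m} \<longrightarrow> tb S \<in> S)"

definition CM :: "(nat list list \<Rightarrow> nat) \<Rightarrow> nat \<Rightarrow> nat list list \<Rightarrow> bool" where
  "CM f m P \<longleftrightarrow> (\<exists>Q \<in> profiles m (length P). f Q \<noteq> f P \<and>
      (\<forall>v < length P. Q ! v \<noteq> P ! v \<longrightarrow> prefers (P ! v) (f Q) (f P)))"

definition pc_weight :: "nat \<Rightarrow> real \<Rightarrow> nat list \<Rightarrow> real" where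
  "pc_weight m \<theta> r = \<theta> * (if r = [1..<m+1] then 1 else 0) + (1 - \<theta>) / fact m"

definition rho :: "(nat list list \<Rightarrow> nat) \<Rightarrow> nat \<Rightarrow> nat \<Rightarrow> real \<Rightarrow> real" where
  "rho f m n \<theta> = (\<Sum>P \<in> profiles m n.
      if CM f m P then (\<Prod>v<n. pc_weight m \<theta> (P ! v)) else 0)"

definition theta_c :: "nat \<Rightarrow> real" where
  "theta_c m = (real m - 2) / (3 * real m - 2)"

end

theory Submission
  imports Defs "HOL-Combinatorics.Multiset_Permutations"
begin

(* If Plurality is coalitionally manipulable at a profile, then either the winner is not
   candidate 1, so some c ~= 1 scores at least as much as 1, or the winner is 1 and some
   c ~= 1 is preferred to 1 by at least as many voters as rank 1 first (voters ranking the
   winner first never join a coalition).  Either event says that a sum of n independent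
   per-voter margins with values in {-1, 0, 1} is nonnegative.  Under Perturbed Culture
   these margins have means -theta and -theta + (1 - theta) (1/2 - 1/m), and the latter
   equals -(3m - 2)/(2m) (theta - theta_c): this is where theta_c comes from.  Both means
   are at most -(theta - theta_c), so a Chernoff bound based on exp x <= 1 + x + x^2 for
   |x| <= 1 bounds each event by exp (-(theta - theta_c)^2 n / 4), and a union bound over
   the 2 (m - 1) <= 2 m! events gives the theorem with A = 1/4. *)

definition iid_prob :: "'a set \<Rightarrow> ('a \<Rightarrow> real) \<Rightarrow> nat \<Rightarrow> ('a list \<Rightarrow> bool) \<Rightarrow> real" where
  "iid_prob S w n E = (\<Sum>P | length P = n \<and> set P \<subseteq> S. if E P then \<Prod>v<n. w (P ! v) else 0)"

lemma lists_length_Suc: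
  "{P. length P = Suc n \<and> set P \<subseteq> S} = (\<lambda>(x, P). x # P) ` (S \<times> {P. length P = n \<and> set P \<subseteq> S})"
  by (auto simp: length_Suc_conv image_iff)

lemma sum_lists_length_prod:
  fixes h :: "'a \<Rightarrow> 'b::comm_semiring_1"
  assumes "finite S"
  shows "(\<Sum>P | length P = n \<and> set P \<subseteq> S. \<Prod>v<n. h (P ! v)) = (\<Sum>x\<in>S. h x) ^ n"
proof (induction n)
  case 0
  have "{P. length P = 0 \<and> set P \<subseteq> S} = {[]}" by auto
  then show ?case by simp
next
  case (Suc n)
  let ?L = "{P. length P = n \<and> set P \<subseteq> S}"
  have inj: "inj_on (\<lambda>(x, P). x # P) (S \<times> ?L)" by (auto simp: inj_on_def)
  have "(\<Sum>P | length P = Suc n \<and> set P \<subseteq> S. \<Prod>v<Suc n. h (P ! v))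
      = (\<Sum>(x, P)\<in>S \<times> ?L. \<Prod>v<Suc n. h ((x # P) ! v))"
    unfolding lists_length_Suc by (subst sum.reindex[OF inj]) (simp add: case_prod_beta)
  also have "\<dots> = (\<Sum>(x, P)\<in>S \<times> ?L. h x * (\<Prod>v<n. h (P ! v)))"
    by (simp only: prod.lessThan_Suc_shift nth_Cons_0 nth_Cons_Suc)
  also have "\<dots> = (\<Sum>x\<in>S. h x) * (\<Sum>P\<in>?L. \<Prod>v<n. h (P ! v))"
    by (simp add: sum.cartesian_product[symmetric] sum_product)
  finally show ?case using Suc by simp
qed

lemma prod_weights_nonneg:
  fixes w :: "'a \<Rightarrow> 'b::linordered_semidom"
  assumes "\<And>x. x \<in> S \<Longrightarrow> 0 \<le> w x" and "length P = n" and "set P \<subseteq> S"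
  shows "0 \<le> (\<Prod>v<n. w (P ! v))"
proof (intro prod_nonneg)
  fix v assume "v \<in> {..<n}"
  then show "0 \<le> w (P ! v)" using assms nth_mem by blast
qed

lemma iid_prob_mono:
  assumes "\<And>x. x \<in> S \<Longrightarrow> 0 \<le> w x"
    and "\<And>P. length P = n \<Longrightarrow> set P \<subseteq> S \<Longrightarrow> E P \<Longrightarrow> F P"
  shows "iid_prob S w n E \<le> iid_prob S w n F"
  unfolding iid_prob_def using assms(2) by (intro sum_mono) (auto intro: prod_weights_nonneg[OF assms(1)])

lemma iid_prob_Bex_le:
  assumes "finite C" and "\<And>x. x \<in> S \<Longrightarrow> 0 \<le> w x"
  shows "iid_prob S w n (\<lambda>P. \<exists>c\<in>C. E c P) \<le> (\<Sum>c\<in>C. iid_prob S w n (E c))"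
  using assms(1)
proof (induction C rule: finite_induct)
  case (insert c C)
  have "iid_prob S w n (\<lambda>P. \<exists>c'\<in>insert c C. E c' P)
      \<le> iid_prob S w n (E c) + iid_prob S w n (\<lambda>P. \<exists>c'\<in>C. E c' P)"
    unfolding iid_prob_def sum.distrib[symmetric]
    by (intro sum_mono) (auto intro: prod_weights_nonneg[OF assms(2)])
  then show ?case using insert by simp
qed (simp add: iid_prob_def)

lemma exp_le_one_plus_x_plus_sq:
  fixes x :: real
  assumes "\<bar>x\<bar> \<le> 1"
  shows "exp x \<le> 1 + x + x\<^sup>2"
proof (cases "0 \<le> x")
  case True
  then show ?thesis using assms exp_bound by simp
next
  case False
  have "exp x * (1 - x) \<le> exp x * exp (- x)"
    using exp_ge_add_one_self[of "- x"] by (intro mult_left_mono) auto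
  also have "\<dots> = 1" by (simp add: exp_minus_inverse)
  also have "\<dots> \<le> (1 + x + x\<^sup>2) * (1 - x)"
    using False mult_nonpos_nonneg[of x "x * x"] by (simp add: algebra_simps power2_eq_square)
  finally show ?thesis using False by (simp add: mult_le_cancel_right)
qed

lemma moment_generating_le:
  fixes w g :: "'a \<Rightarrow> real"
  assumes "finite S" and w_nonneg: "\<And>x. x \<in> S \<Longrightarrow> 0 \<le> w x" and w_sum: "sum w S = 1"
    and g_bounded: "\<And>x. x \<in> S \<Longrightarrow> \<bar>g x\<bar> \<le> 1"
    and mean: "(\<Sum>x\<in>S. w x * g x) \<le> - \<delta>" and "0 \<le> \<delta>" "\<delta> \<le> 2"
  shows "(\<Sum>x\<in>S. w x * exp (\<delta> / 2 * g x)) \<le> exp (- (\<delta>\<^sup>2 / 4))"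
proof -
  define t where "t = \<delta> / 2"
  have t: "0 \<le> t" "t \<le> 1" using assms unfolding t_def by auto
  have exp_le: "exp (t * g x) \<le> 1 + t * g x + t\<^sup>2" if "x \<in> S" for x
  proof -
    have g: "\<bar>g x\<bar> \<le> 1" by (rule g_bounded[OF that])
    have "\<bar>t * g x\<bar> \<le> 1"
      using g t by (simp add: abs_mult mult_le_one)
    moreover have "(t * g x)\<^sup>2 \<le> t\<^sup>2"
      using g t by (simp add: power_mult_distrib abs_square_le_1 mult_left_le)
    ultimately show ?thesis using exp_le_one_plus_x_plus_sq[of "t * g x"] by linarith
  qed
  have "(\<Sum>x\<in>S. w x * exp (t * g x)) \<le> (\<Sum>x\<in>S. w x * (1 + t * g x + t\<^sup>2))"
    using exp_le w_nonneg by (intro sum_mono mult_left_mono)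
  also have "\<dots> = (\<Sum>x\<in>S. w x * (1 + t\<^sup>2) + t * (w x * g x))"
    by (simp add: algebra_simps)
  also have "\<dots> = 1 + t\<^sup>2 + t * (\<Sum>x\<in>S. w x * g x)"
    by (simp add: sum.distrib sum_distrib_left[symmetric] sum_distrib_right[symmetric] w_sum)
  also have "\<dots> \<le> 1 + t\<^sup>2 - t * \<delta>"
    using mult_left_mono[OF mean t(1)] by simp
  also have "\<dots> = 1 + (- (\<delta>\<^sup>2 / 4))" by (simp add: t_def power2_eq_square)
  also have "\<dots> \<le> exp (- (\<delta>\<^sup>2 / 4))" by (rule exp_ge_add_one_self)
  finally show ?thesis unfolding t_def .
qed

lemma iid_prob_sum_nonneg_le:
  fixes w g :: "'a \<Rightarrow> real"
  assumes "finite S" and w_nonneg: "\<And>x. x \<in> S \<Longrightarrow> 0 \<le> w x" and "sum w S = 1"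
    and "\<And>x. x \<in> S \<Longrightarrow> \<bar>g x\<bar> \<le> 1"
    and "(\<Sum>x\<in>S. w x * g x) \<le> - \<delta>" and "0 \<le> \<delta>" "\<delta> \<le> 2"
  shows "iid_prob S w n (\<lambda>P. 0 \<le> (\<Sum>v<n. g (P ! v))) \<le> exp (- (\<delta>\<^sup>2 / 4) * n)"
proof -
  define t where "t = \<delta> / 2"
  let ?W = "\<lambda>P. \<Prod>v<n. w (P ! v)"
  have "iid_prob S w n (\<lambda>P. 0 \<le> (\<Sum>v<n. g (P ! v)))
      \<le> (\<Sum>P | length P = n \<and> set P \<subseteq> S. ?W P * exp (t * (\<Sum>v<n. g (P ! v))))"
    \<comment> \<open>Markov's inequality for the exponential moment\<close>
    unfolding iid_prob_def
  proof (intro sum_mono)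
    fix P assume "P \<in> {P. length P = n \<and> set P \<subseteq> S}"
    then have W: "0 \<le> ?W P" by (intro prod_weights_nonneg[OF w_nonneg]) auto
    show "(if 0 \<le> (\<Sum>v<n. g (P ! v)) then ?W P else 0)
        \<le> ?W P * exp (t * (\<Sum>v<n. g (P ! v)))"
    proof (cases "0 \<le> (\<Sum>v<n. g (P ! v))")
      case True
      then have "1 \<le> exp (t * (\<Sum>v<n. g (P ! v)))"
        using \<open>0 \<le> \<delta>\<close> by (simp add: t_def)
      then show ?thesis using True W by (simp add: mult_le_cancel_left1)
    qed (simp add: W)
  qed
  also have "\<dots> = (\<Sum>P | length P = n \<and> set P \<subseteq> S. \<Prod>v<n. w (P ! v) * exp (t * g (P ! v)))"
    by (simp add: sum_distrib_left exp_sum prod.distrib)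
  also have "\<dots> = (\<Sum>x\<in>S. w x * exp (t * g x)) ^ n"
    by (rule sum_lists_length_prod[OF \<open>finite S\<close>])
  also have "\<dots> \<le> exp (- (\<delta>\<^sup>2 / 4)) ^ n"
  proof (rule power_mono)
    show "(\<Sum>x\<in>S. w x * exp (t * g x)) \<le> exp (- (\<delta>\<^sup>2 / 4))"
      unfolding t_def by (rule moment_generating_le[OF assms])
    show "0 \<le> (\<Sum>x\<in>S. w x * exp (t * g x))"
      using w_nonneg by (simp add: sum_nonneg)
  qed
  also have "\<dots> = exp (- (\<delta>\<^sup>2 / 4) * n)"
    by (metis exp_of_nat_mult mult.commute)
  finally show ?thesis .
qed

lemma rankings_eq_permutations_of_set: "rankings m = permutations_of_set {1..m}"
  unfolding rankings_def permutations_of_set_def by auto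

lemma finite_rankings [simp]: "finite (rankings m)"
  by (simp add: rankings_eq_permutations_of_set)

lemma card_rankings: "card (rankings m) = fact m"
  by (simp add: rankings_eq_permutations_of_set)

lemma identity_ranking: "[1..<m+1] \<in> rankings m"
  unfolding rankings_def by auto

lemma ranking_not_Nil: "r \<in> rankings m \<Longrightarrow> 1 \<le> m \<Longrightarrow> r \<noteq> []"
  unfolding rankings_def by auto

lemma hd_ranking_in_candidates:
  assumes "r \<in> rankings m" and "1 \<le> m"
  shows "hd r \<in> {1..m}"
  using assms hd_in_set[of r] unfolding rankings_def by fastforce

lemma sum_rankings_map_permutes:
  assumes "\<sigma> permutes {1..m}"
  shows "(\<Sum>r\<in>rankings m. h (map \<sigma> r)) = (\<Sum>r\<in>rankings m. h r)"
proof -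
  have "inj_on (map \<sigma>) (rankings m)"
    using inj_mapI[OF permutes_inj[OF assms]] by (rule inj_on_subset) simp
  moreover have "map \<sigma> ` rankings m = rankings m"
    unfolding rankings_eq_permutations_of_set by (rule permutations_of_set_image_permutes[OF assms])
  ultimately show ?thesis
    by (metis sum.reindex comp_apply sum.cong)
qed

lemma card_rankings_map_permutes:
  assumes "\<sigma> permutes {1..m}"
  shows "card {r \<in> rankings m. p (map \<sigma> r)} = card {r \<in> rankings m. p r}"
  using sum_rankings_map_permutes[OF assms, of "\<lambda>r. of_bool (p r) :: nat"]
  by (simp add: Int_def conj_commute)

lemma prefers_map_inj:
  assumes "inj \<sigma>"
  shows "prefers (map \<sigma> r) (\<sigma> a) (\<sigma> b) \<longleftrightarrow> prefers r a b"
  unfolding prefers_def by (fastforce simp: inj_eq[OF assms])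

lemma prefers_hd:
  assumes "distinct r" and "a \<in> set r" and "a \<noteq> hd r"
  shows "prefers r (hd r) a"
proof -
  obtain j where j: "j < length r" "r ! j = a" using assms(2) by (auto simp: in_set_conv_nth)
  then have "r \<noteq> []" by auto
  then have "0 < j" using j assms(3) by (metis gr0I hd_conv_nth)
  then show ?thesis unfolding prefers_def using j \<open>r \<noteq> []\<close> by (metis hd_conv_nth)
qed

lemma not_prefers_hd:
  assumes "distinct r"
  shows "\<not> prefers r a (hd r)"
proof
  assume "prefers r a (hd r)"
  then obtain j where "0 < j" "j < length r" "r ! j = hd r"
    unfolding prefers_def by (metis gr_zeroI not_less0)
  moreover from this have "r ! j = r ! 0" by (metis hd_conv_nth list.size(3) not_less0)
  ultimately show False using nth_eq_iff_index_eq[OF assms, of j 0] by fastforce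
qed

lemma prefers_asym:
  assumes "distinct r" and "prefers r a b"
  shows "\<not> prefers r b a"
  using assms unfolding prefers_def by (auto simp: nth_eq_iff_index_eq)

lemma prefers_total:
  assumes "a \<in> set r" and "b \<in> set r" and "a \<noteq> b"
  shows "prefers r a b \<or> prefers r b a"
proof -
  obtain i j where "i < length r" "r ! i = a" "j < length r" "r ! j = b"
    using assms(1,2) by (auto simp: in_set_conv_nth)
  then show ?thesis unfolding prefers_def using assms(3) by (metis linorder_neqE_nat)
qed

lemma card_rankings_hd:
  assumes c: "c \<in> {1..m}"
  shows "card {r \<in> rankings m. hd r = c} = fact (m - 1)"
proof -
  have m: "1 \<le> m" using c by simp
  have fiber_eq: "card {r \<in> rankings m. hd r = d} = card {r \<in> rankings m. hd r = c}"
    if d: "d \<in> {1..m}" for d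
  proof -
    let ?\<sigma> = "Transposition.transpose c d"
    have "?\<sigma> permutes {1..m}" using c d by (rule permutes_swap_id)
    then have "card {r \<in> rankings m. hd (map ?\<sigma> r) = d} = card {r \<in> rankings m. hd r = d}"
      by (rule card_rankings_map_permutes)
    moreover have "hd (map ?\<sigma> r) = d \<longleftrightarrow> hd r = c" if "r \<in> rankings m" for r
      using ranking_not_Nil[OF that m] by (auto simp: hd_map transpose_def)
    then have "{r \<in> rankings m. hd (map ?\<sigma> r) = d} = {r \<in> rankings m. hd r = c}"
      by blast
    ultimately show ?thesis by simp
  qed
  have "card (\<Union>d\<in>{1..m}. {r \<in> rankings m. hd r = d})
      = (\<Sum>d\<in>{1..m}. card {r \<in> rankings m. hd r = d})"
    by (rule card_UN_disjoint) auto
  moreover have "(\<Union>d\<in>{1..m}. {r \<in> rankings m. hd r = d}) = rankings m"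
    using hd_ranking_in_candidates[OF _ m] by auto
  ultimately have "card (rankings m) = (\<Sum>d\<in>{1..m}. card {r \<in> rankings m. hd r = d})"
    by simp
  also have "\<dots> = (\<Sum>d\<in>{1..m}. card {r \<in> rankings m. hd r = c})"
    by (rule sum.cong[OF refl fiber_eq])
  also have "\<dots> = m * card {r \<in> rankings m. hd r = c}"
    by simp
  finally have "m * card {r \<in> rankings m. hd r = c} = m * fact (m - 1)"
    using fact_reduce[where 'a=nat, of m] m by (simp add: card_rankings)
  then show ?thesis using m by simp
qed

lemma card_rankings_prefers:
  assumes a: "a \<in> {1..m}" and b: "b \<in> {1..m}" and "a \<noteq> b"
  shows "2 * card {r \<in> rankings m. prefers r a b} = fact m"
proof -
  let ?\<sigma> = "Transposition.transpose a b"
  have "?\<sigma> permutes {1..m}" using a b by (rule permutes_swap_id)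
  then have "card {r \<in> rankings m. prefers (map ?\<sigma> r) a b} = card {r \<in> rankings m. prefers r a b}"
    by (rule card_rankings_map_permutes)
  moreover have "prefers (map ?\<sigma> r) a b \<longleftrightarrow> prefers r b a" for r
    using prefers_map_inj[OF inj_transpose, of a b r b a] by simp
  ultimately have swap: "card {r \<in> rankings m. prefers r b a} = card {r \<in> rankings m. prefers r a b}"
    by simp
  have "prefers r a b \<noteq> prefers r b a" if "r \<in> rankings m" for r
    using that a b \<open>a \<noteq> b\<close> prefers_total[of a r b] prefers_asym[of r a b]
    unfolding rankings_def by auto
  then have cover: "rankings m = {r \<in> rankings m. prefers r a b} \<union> {r \<in> rankings m. prefers r b a}"
    and disjoint: "{r \<in> rankings m. prefers r a b} \<inter> {r \<in> rankings m. prefers r b a} = {}"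
    by blast+
  have "fact m = card ({r \<in> rankings m. prefers r a b} \<union> {r \<in> rankings m. prefers r b a})"
    using cover card_rankings by metis
  also have "\<dots> = card {r \<in> rankings m. prefers r a b} + card {r \<in> rankings m. prefers r b a}"
    by (rule card_Un_disjoint) (simp_all add: disjoint)
  finally show ?thesis using swap by simp
qed

lemma sum_rankings_of_bool:
  "(\<Sum>r\<in>rankings m. of_bool (p r) :: 'a::semiring_1) = of_nat (card {r \<in> rankings m. p r})"
  by (simp add: Int_def conj_commute)

lemma sum_lessThan_of_bool:
  "(\<Sum>v<n. of_bool (p v) :: 'a::semiring_1) = of_nat (card {v. v < (n::nat) \<and> p v})"
proof -
  have "{..<n} \<inter> {v. p v} = {v. v < n \<and> p v}" by auto
  then show ?thesis by simp
qed

lemma pc_weight_nonneg: "0 \<le> \<theta> \<Longrightarrow> \<theta> \<le> 1 \<Longrightarrow> 0 \<le> pc_weight m \<theta> r"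
  unfolding pc_weight_def by simp

lemma sum_pc_weight_mult:
  "(\<Sum>r\<in>rankings m. pc_weight m \<theta> r * g r)
     = \<theta> * g [1..<m+1] + (1 - \<theta>) / fact m * (\<Sum>r\<in>rankings m. g r)"
proof -
  have "(\<Sum>r\<in>rankings m. pc_weight m \<theta> r * g r)
      = (\<Sum>r\<in>rankings m. if r = [1..<m+1] then \<theta> * g r else 0)
        + (\<Sum>r\<in>rankings m. (1 - \<theta>) / fact m * g r)"
    unfolding sum.distrib[symmetric] pc_weight_def by (rule sum.cong) (auto simp: algebra_simps)
  then show ?thesis
    using identity_ranking[of m] by (simp add: sum.delta' sum_distrib_left del: upt_Suc)
qed

lemma sum_pc_weight: "(\<Sum>r\<in>rankings m. pc_weight m \<theta> r) = 1"
  using sum_pc_weight_mult[of m \<theta> "\<lambda>_. 1"] by (simp add: card_rankings)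

definition score_margin :: "nat \<Rightarrow> nat list \<Rightarrow> real" where
  "score_margin c r = of_bool (hd r = c) - of_bool (hd r = 1)"

definition coalition_margin :: "nat \<Rightarrow> nat list \<Rightarrow> real" where
  "coalition_margin c r = of_bool (prefers r c 1) - of_bool (hd r = 1)"

lemma abs_score_margin_le: "\<bar>score_margin c r\<bar> \<le> 1"
  unfolding score_margin_def by simp

lemma abs_coalition_margin_le: "\<bar>coalition_margin c r\<bar> \<le> 1"
  unfolding coalition_margin_def by simp

lemma sum_pc_weight_score_margin:
  assumes "c \<in> {2..m}"
  shows "(\<Sum>r\<in>rankings m. pc_weight m \<theta> r * score_margin c r) = - \<theta>"
proof -
  have "(\<Sum>r\<in>rankings m. score_margin c r)
      = real (card {r \<in> rankings m. hd r = c}) - real (card {r \<in> rankings m. hd r = 1})"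
    unfolding score_margin_def sum_subtractf sum_rankings_of_bool ..
  also have "\<dots> = 0" using assms card_rankings_hd[of _ m] by simp
  finally show ?thesis
    using assms by (simp add: sum_pc_weight_mult score_margin_def hd_upt del: upt_Suc)
qed

lemma sum_pc_weight_coalition_margin:
  assumes "c \<in> {2..m}"
  shows "(\<Sum>r\<in>rankings m. pc_weight m \<theta> r * coalition_margin c r)
    = - \<theta> + (1 - \<theta>) * (1 / 2 - 1 / m)"
proof -
  have m: "1 \<le> m" using assms by simp
  have "(\<Sum>r\<in>rankings m. coalition_margin c r)
      = real (card {r \<in> rankings m. prefers r c 1}) - real (card {r \<in> rankings m. hd r = 1})"
    unfolding coalition_margin_def sum_subtractf sum_rankings_of_bool ..
  also have "\<dots> = fact m / 2 - fact m / m"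
  proof -
    have "real (2 * card {r \<in> rankings m. prefers r c 1}) = fact m"
      using assms card_rankings_prefers[of c m 1] by simp
    moreover have "real (card {r \<in> rankings m. hd r = 1}) * m = fact m"
      using m card_rankings_hd[of 1 m] fact_reduce[of m, where 'a=real] by simp
    ultimately show ?thesis using m by (simp add: field_simps)
  qed
  also have "\<dots> = fact m * (1 / 2 - 1 / m)"
    by (simp add: right_diff_distrib)
  finally have sum_eq: "(\<Sum>r\<in>rankings m. coalition_margin c r) = fact m * (1 / 2 - 1 / m)" .
  have "\<not> prefers [1..<m+1] c 1"
    using not_prefers_hd[of "[1..<m+1]" c] m by (simp add: hd_upt del: upt_Suc)
  then have "coalition_margin c [1..<m+1] = -1"
    using m by (simp add: coalition_margin_def hd_upt del: upt_Suc)
  then show ?thesis by (simp add: sum_pc_weight_mult sum_eq)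
qed

lemma valid_tiebreakD:
  "valid_tiebreak m tb \<Longrightarrow> S \<noteq> {} \<Longrightarrow> S \<subseteq> {1..m} \<Longrightarrow> tb S \<in> S"
  unfolding valid_tiebreak_def by blast

lemma plurality_winner:
  assumes "1 \<le> m" and "valid_tiebreak m tb"
  shows "plurality tb m P \<in> {1..m}"
    and "d \<in> {1..m} \<Longrightarrow> plu_score P d \<le> plu_score P (plurality tb m P)"
proof -
  let ?S = "{c \<in> {1..m}. \<forall>d \<in> {1..m}. plu_score P d \<le> plu_score P c}"
  have "Max (plu_score P ` {1..m}) \<in> plu_score P ` {1..m}"
    using assms(1) by (intro Max_in) auto
  then obtain c where c: "c \<in> {1..m}" and max: "plu_score P c = Max (plu_score P ` {1..m})"
    by auto
  have "plu_score P d \<le> plu_score P c" if "d \<in> {1..m}" for d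
    unfolding max using that by (intro Max_ge) auto
  then have "?S \<noteq> {}" using c by blast
  then have "plurality tb m P \<in> ?S"
    unfolding plurality_def by (rule valid_tiebreakD[OF assms(2)]) auto
  then show "plurality tb m P \<in> {1..m}"
    and "d \<in> {1..m} \<Longrightarrow> plu_score P d \<le> plu_score P (plurality tb m P)"
    by simp_all
qed

lemma plu_score_le_of_coalition:
  assumes "length Q = length P" and "\<And>v. v < length P \<Longrightarrow> distinct (P ! v)"
    and "\<And>v. v < length P \<Longrightarrow> Q ! v \<noteq> P ! v \<Longrightarrow> prefers (P ! v) x w"
  shows "plu_score P w \<le> plu_score Q w"
  unfolding plu_score_def assms(1)
proof (intro card_mono subsetI)
  fix v assume v: "v \<in> {v. v < length P \<and> hd (P ! v) = w}"
  then have "Q ! v = P ! v" using assms(3) not_prefers_hd[OF assms(2)] by blast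
  then show "v \<in> {v. v < length P \<and> hd (Q ! v) = w}" using v by simp
qed simp

lemma plu_score_of_coalition_le_card_prefers:
  assumes "length Q = length P" and "\<And>v. v < length P \<Longrightarrow> distinct (P ! v) \<and> w \<in> set (P ! v)"
    and "x \<noteq> w" and "\<And>v. v < length P \<Longrightarrow> Q ! v \<noteq> P ! v \<Longrightarrow> prefers (P ! v) x w"
  shows "plu_score Q x \<le> card {v. v < length P \<and> prefers (P ! v) x w}"
  unfolding plu_score_def assms(1)
proof (intro card_mono subsetI)
  fix v assume "v \<in> {v. v < length P \<and> hd (Q ! v) = x}"
  then have v: "v < length P" "hd (Q ! v) = x" by auto
  show "v \<in> {v. v < length P \<and> prefers (P ! v) x w}"
  proof (cases "Q ! v = P ! v")
    case True
    then show ?thesis using v assms(2)[OF v(1)] prefers_hd[of "P ! v" w] assms(3) by auto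
  next
    case False
    then show ?thesis using v assms(4) by auto
  qed
qed simp

lemma CM_plurality_obtains_challenger:
  assumes m: "1 \<le> m" and tb: "valid_tiebreak m tb" and P: "P \<in> profiles m n"
    and "CM (plurality tb m) m P"
  obtains c where "c \<in> {1..m}" and "c \<noteq> plurality tb m P"
    and "plu_score P (plurality tb m P) \<le> card {v. v < n \<and> prefers (P ! v) c (plurality tb m P)}"
proof -
  define w where "w = plurality tb m P"
  have lenP: "length P = n" using P unfolding profiles_def by simp
  have w: "w \<in> {1..m}" unfolding w_def by (rule plurality_winner(1)[OF m tb])
  have Pv: "distinct (P ! v) \<and> w \<in> set (P ! v)" if "v < length P" for v
  proof -
    have "P ! v \<in> set P" using that by simp
    then show ?thesis using P w unfolding profiles_def rankings_def by blast
  qed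
  obtain Q where Q: "Q \<in> profiles m n" and ne: "plurality tb m Q \<noteq> w"
    and coalition: "\<And>v. v < length P \<Longrightarrow> Q ! v \<noteq> P ! v \<Longrightarrow> prefers (P ! v) (plurality tb m Q) w"
    using assms(4) unfolding CM_def w_def lenP by blast
  define c where "c = plurality tb m Q"
  have lenQ: "length Q = length P" using Q lenP unfolding profiles_def by simp
  have "plu_score P w \<le> plu_score Q w"
    using Pv by (intro plu_score_le_of_coalition[OF lenQ _ coalition]) blast
  also have "\<dots> \<le> plu_score Q c"
    unfolding c_def by (rule plurality_winner(2)[OF m tb w])
  also have "\<dots> \<le> card {v. v < n \<and> prefers (P ! v) c w}"
    using plu_score_of_coalition_le_card_prefers[OF lenQ Pv ne coalition] unfolding c_def lenP .
  finally show ?thesis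
    using that[of c] plurality_winner(1)[OF m tb] ne unfolding c_def w_def by blast
qed

definition margins :: "nat \<Rightarrow> (nat list \<Rightarrow> real) set" where
  "margins m = score_margin ` {2..m} \<union> coalition_margin ` {2..m}"

lemma CM_plurality_imp_margin_nonneg:
  assumes m: "2 \<le> m" and tb: "valid_tiebreak m tb" and P: "P \<in> profiles m n"
    and cm: "CM (plurality tb m) m P"
  shows "\<exists>g\<in>margins m. 0 \<le> (\<Sum>v<n. g (P ! v))"
proof -
  define w where "w = plurality tb m P"
  have m1: "1 \<le> m" using m by simp
  have lenP: "length P = n" using P unfolding profiles_def by simp
  have score: "(\<Sum>v<n. of_bool (hd (P ! v) = d)) = real (plu_score P d)" for d
    unfolding plu_score_def lenP by (rule sum_lessThan_of_bool)
  show ?thesis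
  proof (cases "w = 1")
    case False
    have "plu_score P 1 \<le> plu_score P w"
      unfolding w_def using plurality_winner(2)[OF m1 tb] m1 by simp
    then have "0 \<le> (\<Sum>v<n. score_margin w (P ! v))"
      unfolding score_margin_def sum_subtractf score by simp
    moreover have "w \<in> {2..m}" using False plurality_winner(1)[OF m1 tb, of P] unfolding w_def by auto
    ultimately show ?thesis unfolding margins_def by blast
  next
    case True
    have "plurality tb m P = 1" using True unfolding w_def .
    then obtain c where c: "c \<in> {1..m}" "c \<noteq> 1"
      and "plu_score P 1 \<le> card {v. v < n \<and> prefers (P ! v) c 1}"
      using CM_plurality_obtains_challenger[OF m1 tb P cm] by metis
    then have "0 \<le> (\<Sum>v<n. coalition_margin c (P ! v))"
      unfolding coalition_margin_def sum_subtractf sum_lessThan_of_bool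
      by (simp add: plu_score_def lenP)
    moreover have "c \<in> {2..m}" using c by auto
    ultimately show ?thesis unfolding margins_def by blast
  qed
qed

lemma sum_pc_weight_margins_le:
  assumes m: "2 \<le> m" and \<theta>: "theta_c m \<le> \<theta>" and c: "c \<in> {2..m}"
  shows "(\<Sum>r\<in>rankings m. pc_weight m \<theta> r * score_margin c r) \<le> - (\<theta> - theta_c m)"
    and "(\<Sum>r\<in>rankings m. pc_weight m \<theta> r * coalition_margin c r) \<le> - (\<theta> - theta_c m)"
proof -
  show "(\<Sum>r\<in>rankings m. pc_weight m \<theta> r * score_margin c r) \<le> - (\<theta> - theta_c m)"
    using m by (simp add: sum_pc_weight_score_margin[OF c] theta_c_def)
  have "- \<theta> + (1 - \<theta>) * (1 / 2 - 1 / m) = - (3 * m - 2) / (2 * m) * (\<theta> - theta_c m)"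
    using m by (simp add: theta_c_def field_simps)
  also have "\<dots> \<le> - (\<theta> - theta_c m)"
  proof -
    have "1 \<le> (3 * m - 2) / (2 * m)" using m by (simp add: field_simps)
    from mult_right_mono[OF this, of "\<theta> - theta_c m"] show ?thesis using \<theta> by simp
  qed
  finally show "(\<Sum>r\<in>rankings m. pc_weight m \<theta> r * coalition_margin c r) \<le> - (\<theta> - theta_c m)"
    by (simp add: sum_pc_weight_coalition_margin[OF c])
qed

lemma rho_eq_iid_prob: "rho f m n \<theta> = iid_prob (rankings m) (pc_weight m \<theta>) n (CM f m)"
  unfolding rho_def iid_prob_def profiles_def ..

lemma card_margins_le_fact: "card (margins m) \<le> 2 * fact m"
proof -
  have "card (margins m)
      \<le> card (score_margin ` {2..m}) + card (coalition_margin ` {2..m})"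
    unfolding margins_def by (rule card_Un_le)
  also have "\<dots> \<le> 2 * card {2..m}"
    using card_image_le[of "{2..m}" score_margin] card_image_le[of "{2..m}" coalition_margin] by simp
  also have "\<dots> \<le> 2 * fact m"
    using fact_ge_self[of m] by simp
  finally show ?thesis .
qed

theorem mainTheorem14:
  fixes m :: nat
  assumes "m \<ge> 2"
  shows "\<exists>A > 0. \<forall>tb. valid_tiebreak m tb \<longrightarrow>
           (\<forall>\<theta> n. theta_c m < \<theta> \<and> \<theta> \<le> 1 \<and> n \<ge> 1 \<longrightarrow>
              rho (plurality tb m) m n \<theta>
                \<le> 2 * fact m * exp (- A * (\<theta> - theta_c m)^2 * real n))"
proof (intro exI[of _ "1/4"] conjI allI impI)
  fix tb \<theta> and n :: nat
  assume tb: "valid_tiebreak m tb" and \<theta>: "theta_c m < \<theta> \<and> \<theta> \<le> 1 \<and> n \<ge> 1"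
  let ?w = "pc_weight m \<theta>" and ?prob = "iid_prob (rankings m) (pc_weight m \<theta>) n"
  let ?bound = "exp (- ((\<theta> - theta_c m)\<^sup>2 / 4) * n)"
  have "0 \<le> theta_c m" using assms by (simp add: theta_c_def)
  then have w_nonneg: "0 \<le> ?w r" for r using \<theta> by (simp add: pc_weight_nonneg)
  have bound: "?prob (\<lambda>P. 0 \<le> (\<Sum>v<n. g (P ! v))) \<le> ?bound" if "g \<in> margins m" for g
    using that \<theta> \<open>0 \<le> theta_c m\<close> sum_pc_weight_margins_le[OF assms]
    by (intro iid_prob_sum_nonneg_le)
       (auto simp: margins_def w_nonneg sum_pc_weight abs_score_margin_le abs_coalition_margin_le)
  have "rho (plurality tb m) m n \<theta> = ?prob (CM (plurality tb m) m)"
    by (rule rho_eq_iid_prob)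
  also have "\<dots> \<le> ?prob (\<lambda>P. \<exists>g\<in>margins m. 0 \<le> (\<Sum>v<n. g (P ! v)))"
    using CM_plurality_imp_margin_nonneg[OF assms tb] w_nonneg
    by (intro iid_prob_mono) (auto simp: profiles_def)
  also have "\<dots> \<le> (\<Sum>g\<in>margins m. ?prob (\<lambda>P. 0 \<le> (\<Sum>v<n. g (P ! v))))"
    by (rule iid_prob_Bex_le) (simp_all add: margins_def w_nonneg)
  also have "\<dots> \<le> (\<Sum>g\<in>margins m. ?bound)"
    using bound by (rule sum_mono)
  also have "\<dots> \<le> 2 * fact m * ?bound"
    using of_nat_mono[OF card_margins_le_fact, where 'a=real] by (simp add: mult_right_mono)
  finally show "rho (plurality tb m) m n \<theta> \<le> 2 * fact m * exp (- (1/4) * (\<theta> - theta_c m)^2 * real n)"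
    by simp
qed simp

end
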